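(* Let $m\in\mathbb{Z}$ and let $h_1,h_2:\mathbb{Z}\to\mathbb{C}$ be functions decreasing sufficiently rapidly at infinity (so that all series below converge absolutely). Then $$\sum_{n\in\mathbb{Z}}\sum_{k=0}^{\infty}(-1)^n\,h_1\!\left(\frac{m+n+|n+m|}{2}+k\right)h_2\!\left(\frac{n-m-|n+m|}{2}-k\right)=\left(\sum_{k=0}^{\infty}(-1)^k h_1(k)\right)\left(\sum_{n=0}^{\infty}(-1)^{m+n}h_2(-m-n)\right).$$ *)

theory Defs
  imports "HOL-Analysis.Analysis"
begin

end

theory Submission
  imports Defs
begin

text \<open>Two natural numbers a, b are determined by their difference and their minimum, so
  (a, b) \<mapsto> (a - b - m, min a b) is a bijection from \<open>\<nat> \<times> \<nat>\<close> onto \<open>\<int> \<times> \<nat>\<close>. Under it the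
  summand of the double series becomes (-1)^a h1(a) times (-1)^(m+b) h2(-m-b), the general term
  of the product of the two series on the right. Both series converge absolutely, so the product
  family is absolutely summable and may be reindexed and summed iteratedly.\<close>

lemma abs_summable_on_comp_inj:
  assumes "(\<lambda>y. norm (f y)) summable_on B" and "inj_on g A" and "g ` A \<subseteq> B"
  shows "(\<lambda>x. norm (f (g x))) summable_on A"
proof -
  have "(\<lambda>y. norm (f y)) summable_on g ` A"
    using assms(1,3) summable_on_subset_banach by blast
  then show ?thesis
    using summable_on_reindex[OF assms(2), of "\<lambda>y. norm (f y)"] by (simp add: o_def)
qed

lemma
  fixes f :: "'a \<Rightarrow> 'c::{banach, real_normed_div_algebra}" and g :: "'b \<Rightarrow> 'c"
  assumes f: "(\<lambda>x. norm (f x)) summable_on A" and g: "(\<lambda>y. norm (g y)) summable_on B"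
  shows summable_on_product_banach: "(\<lambda>(x, y). f x * g y) summable_on A \<times> B"
    and infsum_product_banach: "(\<Sum>\<^sub>\<infinity>(x, y)\<in>A \<times> B. f x * g y) = infsum f A * infsum g B"
proof -
  have "(\<lambda>p. norm ((\<lambda>(x, y). f x * g y) p)) summable_on A \<times> B"
    using f g by (subst Infinite_Sum.abs_summable_on_Sigma_iff)
      (auto intro!: summable_on_cmult_left summable_on_cmult_right
            simp: norm_mult infsum_cmult_right' infsum_nonneg)
  then show summable: "(\<lambda>(x, y). f x * g y) summable_on A \<times> B"
    by (rule abs_summable_summable)
  have "(\<Sum>\<^sub>\<infinity>(x, y)\<in>A \<times> B. f x * g y) = (\<Sum>\<^sub>\<infinity>x\<in>A. \<Sum>\<^sub>\<infinity>y\<in>B. f x * g y)"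
    using infsum_Sigma_banach[OF summable] by simp
  also have "\<dots> = infsum f A * infsum g B"
    by (simp add: infsum_cmult_right' infsum_cmult_left')
  finally show "(\<Sum>\<^sub>\<infinity>(x, y)\<in>A \<times> B. f x * g y) = infsum f A * infsum g B" .
qed

lemma bij_betw_diff_min_nat:
  "bij_betw (\<lambda>(a::nat, b::nat). (int a - int b + c, min a b)) UNIV UNIV"
  by (rule bij_betw_byWitness[where f' = "\<lambda>(d, k). (k + nat (d - c), k + nat (c - d))"]) auto

lemma minus_one_powi_diff:
  "(-1::'a::field) powi (int a - int b - m) = (-1) ^ a * (-1) powi (m + int b)"
  by (simp add: power_int_minus_left minus_one_power_iff)

lemma div2_abs_at_diff_min:
  fixes a b :: nat and m :: int
  defines "n \<equiv> int a - int b - m"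
  shows "(m + n + \<bar>n + m\<bar>) div 2 + int (min a b) = int a"
    and "(n - m - \<bar>n + m\<bar>) div 2 - int (min a b) = - m - int b"
  unfolding n_def by auto

theorem lemma2:
  fixes m :: int and h1 h2 :: "int \<Rightarrow> complex"
  assumes "(\<lambda>x. norm (h1 x)) summable_on UNIV" and "(\<lambda>x. norm (h2 x)) summable_on UNIV"
  shows "(\<Sum>\<^sub>\<infinity>n::int. \<Sum>\<^sub>\<infinity>k::nat.
            (-1) powi n * h1 ((m + n + \<bar>n + m\<bar>) div 2 + int k)
                        * h2 ((n - m - \<bar>n + m\<bar>) div 2 - int k))
       = (\<Sum>\<^sub>\<infinity>k::nat. (-1) ^ k * h1 (int k))
         * (\<Sum>\<^sub>\<infinity>n::nat. (-1) powi (m + int n) * h2 (- m - int n))"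
proof -
  define u where "u = (\<lambda>k::nat. (-1) ^ k * h1 (int k))"
  define v where "v = (\<lambda>b::nat. (-1) powi (m + int b) * h2 (- m - int b))"
  define F where "F = (\<lambda>(n, k :: nat). (-1) powi n * h1 ((m + n + \<bar>n + m\<bar>) div 2 + int k)
                        * h2 ((n - m - \<bar>n + m\<bar>) div 2 - int k))"
  define \<sigma> where "\<sigma> = (\<lambda>(a :: nat, b :: nat). (int a - int b - m, min a b))"
  have bij: "bij \<sigma>"
    using bij_betw_diff_min_nat[of "- m"] by (simp add: \<sigma>_def)
  have F_\<sigma>: "(\<lambda>p. F (\<sigma> p)) = (\<lambda>(a, b). u a * v b)"
  proof (intro ext, clarify)
    fix a b
    show "F (\<sigma> (a, b)) = u a * v b"
      using div2_abs_at_diff_min[where a = a and b = b and m = m]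
      by (simp add: F_def \<sigma>_def u_def v_def minus_one_powi_diff)
  qed
  have u_abs: "(\<lambda>k. norm (u k)) summable_on UNIV"
    using abs_summable_on_comp_inj[OF assms(1), of int] by (simp add: u_def norm_mult norm_power)
  have v_abs: "(\<lambda>b. norm (v b)) summable_on UNIV"
    using abs_summable_on_comp_inj[OF assms(2), of "\<lambda>b. - m - int b"]
    by (simp add: v_def norm_mult norm_power_int inj_on_def)
  have F_summable: "F summable_on UNIV"
    using summable_on_product_banach[OF u_abs v_abs] summable_on_reindex_bij_betw[OF bij, of F]
    by (simp add: F_\<sigma>)
  have "(\<Sum>\<^sub>\<infinity>n. \<Sum>\<^sub>\<infinity>k. F (n, k)) = infsum F UNIV"
    using infsum_Sigma_banach[of F UNIV "\<lambda>_. UNIV"] F_summable by simp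
  also have "\<dots> = (\<Sum>\<^sub>\<infinity>p. F (\<sigma> p))"
    using infsum_reindex_bij_betw[OF bij] by metis
  also have "\<dots> = infsum u UNIV * infsum v UNIV"
    using infsum_product_banach[OF u_abs v_abs] by (simp add: F_\<sigma>)
  finally show ?thesis
    by (simp add: F_def u_def v_def)
qed

end
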